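(* In the switching-gradient setting of the context, suppose there is a deterministic $\mathcal E\ge0$ with $\mathbb P\big(|e_t|\le\mathcal E\text{ for all }t\in[T]\big)\ge1-\delta/2$, where $\delta\in(0,1)$. Set $$\varepsilon:=\frac{R^2}{2\eta T}+\frac{\eta G^2}{2}+\frac{2DG}{\sqrt T}\sqrt{2\log\frac4\delta}+\mathcal E.$$ Then with probability at least $1-\delta$ the set $\mathcal A=\{t\in[T]:v_t\le\varepsilon\}$ is nonempty and $\bar w=\frac1{|\mathcal A|}\sum_{t\in\mathcal A}w_t$ satisfies $f(\bar w)-f(w^\star)\le\varepsilon$ and $h(\bar w)\le\varepsilon+\mathcal E$.
   Context: $(\mathcal X,\|\cdot\|)$ is a reflexive Banach space with dual norm $\|\cdot\|_*$; $\mathcal W\subseteq\mathcal X$ nonempty closed convex; $\Phi$ is a mirror map (proper, weakly l.s.c., $1$-strongly convex on $\mathcal W$ w.r.t. $\|\cdot\|$, Gâteaux differentiable on $\mathcal W$) with Bregman divergence $D_\Phi(x,y)=\Phi(x)-\Phi(y)-\langle\nabla\Phi(y),x-y\rangle$. Problem: minimize $f(w)=\mathbb E[F(w,\xi)]$ over $w\in\mathcal W$ subject to $h(w)=\mathbb E[H(w,\xi)]\le0$, where $f,h$ are convex on $\mathcal W$, and $w^\star$ is an optimal solution. Assume $\sup_{u,v\in\mathcal W}\|u-v\|\le D$ and $\sup_{u,v\in\mathcal W}D_\Phi(u,v)\le R^2/2$. Switching gradient method with constant step $\eta>0$ and horizon $T$: at each $t\in[T]$, a real-valued estimate $v_t$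 of $h(w_t)$ is available, with error $e_t:=v_t-h(w_t)$; set $U_t=\mathbb I_{\{v_t\le\varepsilon\}}F'(w_t,\zeta_t)+(1-\mathbb I_{\{v_t\le\varepsilon\}})H'(w_t,\zeta_t)$ and $w_{t+1}=\arg\min_{w\in\mathcal W}\{\eta\langle U_t,w\rangle+D_\Phi(w,w_t)\}$. Let $(\mathcal G_t)_{t\ge1}$ be an increasing family of $\sigma$-algebras such that $w_t$ and $v_t$ are $\mathcal G_t$-measurable and $\zeta_t$ is $\mathcal G_{t+1}$-measurable (e.g. $\mathcal G_t$ generated by the past and the estimator randomness at time $t$, with $\zeta_t$ independent of $\mathcal G_t$). The stochastic subgradients satisfy $\mathbb E[F'(w_t,\zeta_t)\mid\mathcal G_t]\in\partial f(w_t)$, $\mathbb E[H'(w_t,\zeta_t)\mid\mathcal G_t]\in\partial h(w_t)$, and $\|F'(w,\zeta)\|_*\le G$, $\|H'(w,\zeta)\|_*\le G$ a.s. for all $w\in\mathcal W$. *)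

theory Defs
  imports "HOL-Analysis.Analysis" "HOL-Probability.Probability"
begin

(* The dual space X* is modelled as the bounded linear functionals
  'a \<Rightarrow>\<^sub>L real; its operator norm is the dual norm, and the pairing
  \<langle>g, x\<rangle> is blinfun_apply g x. *)

definition reflexive_space :: "('a::real_normed_vector) itself \<Rightarrow> bool" where
  "reflexive_space _ \<longleftrightarrow>
     (\<forall>\<phi> :: ('a \<Rightarrow>\<^sub>L real) \<Rightarrow>\<^sub>L real. \<exists>x::'a. \<forall>g. blinfun_apply \<phi> g = blinfun_apply g x)"

definition weak_top :: "('a::real_normed_vector) topology" where
  "weak_top = topology_generated_by
     {{x. blinfun_apply g x \<in> U} | (g :: 'a \<Rightarrow>\<^sub>L real) U. open U}"

definition strongly_convex_on1 :: "('a::real_normed_vector) set \<Rightarrow> ('a \<Rightarrow> real) \<Rightarrow> bool" where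
  "strongly_convex_on1 W \<Phi> \<longleftrightarrow>
     (\<forall>x\<in>W. \<forall>y\<in>W. \<forall>l::real. 0 \<le> l \<and> l \<le> 1 \<longrightarrow>
        \<Phi> (l *\<^sub>R x + (1 - l) *\<^sub>R y)
          \<le> l * \<Phi> x + (1 - l) * \<Phi> y - l * (1 - l) / 2 * (norm (x - y))\<^sup>2)"

definition gateaux_grad_on :: "('a::real_normed_vector) set \<Rightarrow> ('a \<Rightarrow> real) \<Rightarrow> ('a \<Rightarrow> ('a \<Rightarrow>\<^sub>L real)) \<Rightarrow> bool" where
  "gateaux_grad_on W \<Phi> d\<Phi> \<longleftrightarrow>
     (\<forall>y\<in>W. \<forall>x\<in>W.
        ((\<lambda>s. (\<Phi> (y + s *\<^sub>R (x - y)) - \<Phi> y) / s) \<longlongrightarrow> blinfun_apply (d\<Phi> y) (x - y)) (at_right 0))"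

(* Mirror map on W: proper (real valued), weakly l.s.c. (relative to W),
  1-strongly convex on W, Gateaux differentiable on W with gradient dPhi. *)
definition mirror_map :: "('a::banach) set \<Rightarrow> ('a \<Rightarrow> real) \<Rightarrow> ('a \<Rightarrow> ('a \<Rightarrow>\<^sub>L real)) \<Rightarrow> bool" where
  "mirror_map W \<Phi> d\<Phi> \<longleftrightarrow>
     (\<forall>c::real. closedin weak_top {x\<in>W. \<Phi> x \<le> c})
     \<and> strongly_convex_on1 W \<Phi>
     \<and> gateaux_grad_on W \<Phi> d\<Phi>"

definition bregman :: "('a::real_normed_vector \<Rightarrow> real) \<Rightarrow> ('a \<Rightarrow> ('a \<Rightarrow>\<^sub>L real)) \<Rightarrow> 'a \<Rightarrow> 'a \<Rightarrow> real" where
  "bregman \<Phi> d\<Phi> x y = \<Phi> x - \<Phi> y - blinfun_apply (d\<Phi> y) (x - y)"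

definition subdiff_on :: "('a::real_normed_vector) set \<Rightarrow> ('a \<Rightarrow> real) \<Rightarrow> 'a \<Rightarrow> ('a \<Rightarrow>\<^sub>L real) set" where
  "subdiff_on W f w = {g. \<forall>u\<in>W. f w + blinfun_apply g (u - w) \<le> f u}"

(* "E[Y | F] \<in> S(\<omega>) a.s." for an X*-valued random variable Y, with the conditional
  expectation understood scalarly: there is g with g(\<omega>) \<in> S(\<omega>) a.s. such that
  E[\<langle>Y, x\<rangle> | F] = \<langle>g, x\<rangle> a.s. for every bounded F-measurable X-valued x. *)
definition cond_exp_in :: "'w measure \<Rightarrow> 'w measure \<Rightarrow> ('w \<Rightarrow> ('a::real_normed_vector \<Rightarrow>\<^sub>L real))
    \<Rightarrow> ('w \<Rightarrow> ('a \<Rightarrow>\<^sub>L real) set) \<Rightarrow> bool" where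
  "cond_exp_in M F Y S \<longleftrightarrow>
     (\<exists>g. (AE \<omega> in M. g \<omega> \<in> S \<omega>) \<and>
        (\<forall>x :: 'w \<Rightarrow> 'a. x \<in> borel_measurable F \<and> bounded (x ` space M) \<longrightarrow>
            integrable M (\<lambda>\<omega>. blinfun_apply (Y \<omega>) (x \<omega>)) \<and>
            (AE \<omega> in M. real_cond_exp M F (\<lambda>\<omega>. blinfun_apply (Y \<omega>) (x \<omega>)) \<omega>
                         = blinfun_apply (g \<omega>) (x \<omega>))))"

end

theory Submission
  imports Defs
begin

(* Each mirror step gives eta <U_t, w_t - wstar> <= D(wstar, w_t) - D(wstar, w_(t+1)) + eta^2 G^2 / 2,
  and these bounds telescope. Conditionally on the past, <U_t, w_t - wstar> dominates the loss
  f(w_t) - f(wstar) on accepted steps and h(w_t) - h(wstar) on rejected ones, and the deviation between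
  the two is a bounded supermartingale difference, so by Azuma-Hoeffding the losses sum to at most
  T (eps - E) with probability 1 - delta/4. When all estimates are E-accurate, every rejected step has
  loss above eps - E, hence some step is accepted and the accepted steps have average f-gap at most
  eps - E; Jensen's inequality carries this, and the constraint bound v_t <= eps, over to their
  average. *)

section \<open>Azuma-Hoeffding inequality for bounded supermartingale differences\<close>

lemma cosh_le_exp_half_sq:
  fixes y :: real
  shows "cosh y \<le> exp (y\<^sup>2 / 2)"
proof -
  have "cosh \<bar>y\<bar> \<le> exp (\<bar>y\<bar>\<^sup>2 / 2)" if "y \<ge> 0" for y :: real
  proof -
    have "-(2*y) * (1/2) + ln (1 + (1/2) * (exp (2*y) - 1)) \<le> (2*y)\<^sup>2 / 8"
      using Hoeffdings_lemma_aux[of "2*y" "1/2"] that by simp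
    then have "ln ((1 + exp (2*y)) / 2) \<le> y + y\<^sup>2/2"
      by (simp add: field_simps power2_eq_square)
    then have "(1 + exp (2*y)) / 2 \<le> exp (y + y\<^sup>2/2)"
      by (smt (verit) exp_gt_zero exp_le_cancel_iff exp_ln)
    then have "(1 + exp (2*y)) / 2 * exp (-y) \<le> exp (y + y\<^sup>2/2) * exp (-y)"
      by (intro mult_right_mono) auto
    then show ?thesis
      using that by (simp add: cosh_def algebra_simps flip: exp_add)
  qed
  from this[of "\<bar>y\<bar>"] show ?thesis
    by (cases "y \<ge> 0") auto
qed

lemma exp_le_cosh_sinh_chord:
  fixes l c x :: real
  assumes "l \<ge> 0" "c > 0" "\<bar>x\<bar> \<le> c"
  shows "exp (l * x) \<le> cosh (l * c) + sinh (l * c) / c * x"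
proof -
  define \<mu> where "\<mu> = (c + x) / (2 * c)"
  have \<mu>: "0 \<le> \<mu>" "\<mu> \<le> 1" "x = (1 - \<mu>) * (-c) + \<mu> * c"
    using assms by (auto simp: \<mu>_def field_simps)
  have "exp (l * ((1 - \<mu>) * (-c) + \<mu> * c)) \<le> (1 - \<mu>) * exp (l * (-c)) + \<mu> * exp (l * c)"
    using convex_onD[OF convex_on_exp[OF assms(1)], of \<mu> "-c" c] \<mu> by simp
  also have "\<dots> = cosh (l * c) + sinh (l * c) / c * x"
    using assms by (simp add: \<mu>_def cosh_def sinh_def field_simps)
  finally show ?thesis
    using \<mu>(3) by simp
qed

locale filtered_prob_space = prob_space M for M :: "'w measure" +
  fixes Fs :: "nat \<Rightarrow> 'w measure"
  assumes subalgebra_Fs: "\<And>t. subalgebra M (Fs t)"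
    and sets_Fs_mono: "\<And>s t. s \<le> t \<Longrightarrow> sets (Fs s) \<subseteq> sets (Fs t)"
begin

lemma space_Fs [simp]: "space (Fs t) = space M"
  using subalgebra_Fs unfolding subalgebra_def by blast

lemma measurable_Fs_mono:
  assumes "s \<le> t" "X \<in> borel_measurable (Fs s)"
  shows "X \<in> borel_measurable (Fs t)"
proof (rule measurable_from_subalg[OF _ assms(2)])
  show "subalgebra (Fs t) (Fs s)"
    using sets_Fs_mono[OF assms(1)] unfolding subalgebra_def by simp
qed

lemma measurable_Fs_imp_measurable:
  "X \<in> borel_measurable (Fs t) \<Longrightarrow> X \<in> borel_measurable M"
  by (rule measurable_from_subalg[OF subalgebra_Fs])

lemma sigma_finite_subalgebra_Fs: "sigma_finite_subalgebra M (Fs t)"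
  by (intro finite_measure_subalgebra_is_sigma_finite finite_measure_subalgebra.intro
      finite_measure_axioms finite_measure_subalgebra_axioms.intro subalgebra_Fs)

end

text \<open>The supermartingale property E[X t | Fs t] \<le> 0 is stated in its weak form, tested against
  bounded nonnegative Fs t-measurable functions.\<close>
locale bounded_supermartingale_differences = filtered_prob_space M Fs for M :: "'w measure" and Fs +
  fixes X :: "nat \<Rightarrow> 'w \<Rightarrow> real" and T :: nat and c :: real
  assumes adapted: "\<And>t. t \<in> {1..T} \<Longrightarrow> X t \<in> borel_measurable (Fs (Suc t))"
    and bounded: "\<And>t \<omega>. t \<in> {1..T} \<Longrightarrow> \<omega> \<in> space M \<Longrightarrow> \<bar>X t \<omega>\<bar> \<le> c"
    and supermartingale: "\<And>t \<psi> K. t \<in> {1..T} \<Longrightarrow> \<psi> \<in> borel_measurable (Fs t) \<Longrightarrow>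
      (\<And>\<omega>. \<omega> \<in> space M \<Longrightarrow> 0 \<le> \<psi> \<omega> \<and> \<psi> \<omega> \<le> K) \<Longrightarrow> (\<integral>\<omega>. \<psi> \<omega> * X t \<omega> \<partial>M) \<le> 0"
begin

lemma partial_sum_measurable:
  "n \<le> T \<Longrightarrow> (\<lambda>\<omega>. \<Sum>t=1..n. X t \<omega>) \<in> borel_measurable (Fs (Suc n))"
  using adapted by (intro borel_measurable_sum measurable_Fs_mono[of "Suc _" "Suc n"]) auto

lemma partial_sum_abs_le:
  assumes "n \<le> T" "\<omega> \<in> space M"
  shows "\<bar>\<Sum>t=1..n. X t \<omega>\<bar> \<le> real n * c"
proof -
  have "\<bar>\<Sum>t=1..n. X t \<omega>\<bar> \<le> (\<Sum>t=1..n. \<bar>X t \<omega>\<bar>)"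
    by (rule sum_abs)
  also have "\<dots> \<le> (\<Sum>t=1..n. c)"
    using bounded assms by (intro sum_mono) auto
  finally show ?thesis
    by simp
qed

lemma integrable_exp_partial_sum:
  assumes "n \<le> T"
  shows "integrable M (\<lambda>\<omega>. exp (l * (\<Sum>t=1..n. X t \<omega>)))"
proof (rule integrable_const_bound[where B = "exp (\<bar>l\<bar> * (real n * c))"])
  show "AE \<omega> in M. norm (exp (l * (\<Sum>t=1..n. X t \<omega>))) \<le> exp (\<bar>l\<bar> * (real n * c))"
  proof (intro AE_I2)
    fix \<omega> assume "\<omega> \<in> space M"
    then have "l * (\<Sum>t=1..n. X t \<omega>) \<le> \<bar>l\<bar> * (real n * c)"
      using mult_left_mono[OF partial_sum_abs_le[OF assms \<open>\<omega> \<in> space M\<close>], of "\<bar>l\<bar>"]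
        abs_ge_self[of "l * (\<Sum>t=1..n. X t \<omega>)"]
      by (simp add: abs_mult)
    then show "norm (exp (l * (\<Sum>t=1..n. X t \<omega>))) \<le> exp (\<bar>l\<bar> * (real n * c))"
      by simp
  qed
qed (use measurable_Fs_imp_measurable[OF partial_sum_measurable[OF assms]] in simp)

lemma exp_partial_sum_integral_le:
  assumes l: "l \<ge> 0" and c: "c > 0" and n: "n \<le> T"
  shows "(\<integral>\<omega>. exp (l * (\<Sum>t=1..n. X t \<omega>)) \<partial>M) \<le> cosh (l * c) ^ n"
  using n
proof (induction n)
  case 0
  then show ?case
    by (simp add: prob_space)
next
  case (Suc n)
  then have n: "n \<le> T" and t: "Suc n \<in> {1..T}"
    by auto
  define \<psi> where "\<psi> \<omega> = exp (l * (\<Sum>t=1..n. X t \<omega>))" for \<omega>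
  define Y where "Y = X (Suc n)"
  have \<psi>_meas: "\<psi> \<in> borel_measurable (Fs (Suc n))"
    unfolding \<psi>_def using partial_sum_measurable[OF n] by measurable
  have \<psi>_bounds: "0 \<le> \<psi> \<omega> \<and> \<psi> \<omega> \<le> exp (l * (real n * c))" if "\<omega> \<in> space M" for \<omega>
    using partial_sum_abs_le[OF n that] l unfolding \<psi>_def
    by (auto intro: mult_left_mono simp: abs_le_iff)
  have int_\<psi>: "integrable M \<psi>"
    unfolding \<psi>_def by (rule integrable_exp_partial_sum[OF n])
  have int_\<psi>Y: "integrable M (\<lambda>\<omega>. \<psi> \<omega> * Y \<omega>)"
  proof (rule integrable_const_bound[where B = "exp (l * (real n * c)) * c"])
    show "AE \<omega> in M. norm (\<psi> \<omega> * Y \<omega>) \<le> exp (l * (real n * c)) * c"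
      using \<psi>_bounds bounded[OF t] unfolding Y_def
      by (intro AE_I2) (auto simp: abs_mult intro: mult_mono)
  qed (use measurable_Fs_imp_measurable[OF \<psi>_meas] measurable_Fs_imp_measurable[OF adapted[OF t]]
       in \<open>simp add: Y_def\<close>)
  have expand: "(\<lambda>\<omega>. \<psi> \<omega> * (cosh (l * c) + sinh (l * c) / c * Y \<omega>))
      = (\<lambda>\<omega>. cosh (l * c) * \<psi> \<omega> + sinh (l * c) / c * (\<psi> \<omega> * Y \<omega>))"
    by (simp add: algebra_simps)
  have "(\<integral>\<omega>. exp (l * (\<Sum>t=1..Suc n. X t \<omega>)) \<partial>M) = (\<integral>\<omega>. \<psi> \<omega> * exp (l * Y \<omega>) \<partial>M)"
    unfolding \<psi>_def Y_def by (simp add: distrib_left exp_add)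
  also have "\<dots> \<le> (\<integral>\<omega>. \<psi> \<omega> * (cosh (l * c) + sinh (l * c) / c * Y \<omega>) \<partial>M)"
  proof (rule integral_mono)
    show "integrable M (\<lambda>\<omega>. \<psi> \<omega> * exp (l * Y \<omega>))"
      using integrable_exp_partial_sum[OF Suc.prems, of l]
      unfolding \<psi>_def Y_def by (simp add: distrib_left exp_add)
    show "integrable M (\<lambda>\<omega>. \<psi> \<omega> * (cosh (l * c) + sinh (l * c) / c * Y \<omega>))"
      unfolding expand using int_\<psi> int_\<psi>Y by simp
    show "\<psi> \<omega> * exp (l * Y \<omega>) \<le> \<psi> \<omega> * (cosh (l * c) + sinh (l * c) / c * Y \<omega>)"
      if "\<omega> \<in> space M" for \<omega>
      using \<psi>_bounds[OF that] exp_le_cosh_sinh_chord[OF l c bounded[OF t that]]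
      unfolding Y_def by (intro mult_left_mono) auto
  qed
  also have "\<dots> = cosh (l * c) * (\<integral>\<omega>. \<psi> \<omega> \<partial>M) + sinh (l * c) / c * (\<integral>\<omega>. \<psi> \<omega> * Y \<omega> \<partial>M)"
    unfolding expand using int_\<psi> int_\<psi>Y by simp
  also have "\<dots> \<le> cosh (l * c) * cosh (l * c) ^ n + 0"
  proof (intro add_mono mult_left_mono)
    show "(\<integral>\<omega>. \<psi> \<omega> \<partial>M) \<le> cosh (l * c) ^ n"
      unfolding \<psi>_def by (rule Suc.IH[OF n])
    show "sinh (l * c) / c * (\<integral>\<omega>. \<psi> \<omega> * Y \<omega> \<partial>M) \<le> 0"
      using supermartingale[OF t \<psi>_meas \<psi>_bounds] l c unfolding Y_def
      by (intro mult_nonneg_nonpos) auto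
  qed (auto intro: less_imp_le)
  finally show ?case
    by simp
qed

theorem azuma_hoeffding_ge:
  assumes c: "c > 0" and s: "s \<ge> 0" and T: "T \<ge> 1"
  shows "measure M {\<omega>\<in>space M. s \<le> (\<Sum>t=1..T. X t \<omega>)} \<le> exp (- s\<^sup>2 / (2 * real T * c\<^sup>2))"
proof -
  define l where "l = s / (real T * c\<^sup>2)"
  have l: "l \<ge> 0"
    using s c T by (simp add: l_def)
  have "measure M {\<omega>\<in>space M. s \<le> (\<Sum>t=1..T. X t \<omega>)}
      \<le> exp (- s * l) * (\<integral>\<omega>. exp (l * (\<Sum>t=1..T. X t \<omega>)) \<partial>M)"
    using l s c T
  proof (cases "l = 0")
    case False
    with l have "l > 0" by simp
    have int: "integrable M (\<lambda>\<omega>. exp (l * (\<Sum>t=1..T. X t \<omega>)))"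
      by (rule integrable_exp_partial_sum) simp
    then have "set_integrable M (space M) (\<lambda>\<omega>. exp (l * (\<Sum>t=1..T. X t \<omega>)))"
      unfolding set_integrable_def by (intro integrable_mult_indicator) auto
    from Chernoff_ineq_ge[OF \<open>l > 0\<close> this sets.top, of s] show ?thesis
      unfolding set_integral_space[OF int] by (simp add: mult_ac)
  qed (use s c T in \<open>simp add: l_def prob_space prob_le_1\<close>)
  also have "\<dots> \<le> exp (- s * l) * cosh (l * c) ^ T"
    using exp_partial_sum_integral_le[OF l c order_refl] by simp
  also have "\<dots> \<le> exp (- s * l) * exp ((l * c)\<^sup>2 / 2) ^ T"
    by (intro mult_left_mono power_mono cosh_le_exp_half_sq) (auto intro: order.trans[OF _ cosh_real_ge_1])
  also have "\<dots> = exp (- s\<^sup>2 / (2 * real T * c\<^sup>2))"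
    using c T by (simp add: l_def exp_of_nat_mult [symmetric] flip: exp_add)
      (simp add: field_simps power2_eq_square)
  finally show ?thesis .
qed

corollary azuma_hoeffding_confidence:
  assumes p: "0 < p" "p \<le> 1"
  shows "measure M {\<omega>\<in>space M. c * sqrt (2 * real T * ln (1 / p)) < (\<Sum>t=1..T. X t \<omega>)} \<le> p"
proof (cases "c > 0 \<and> T \<ge> 1")
  case True
  define s where "s = c * sqrt (2 * real T * ln (1 / p))"
  have s: "s \<ge> 0"
    using True p by (simp add: s_def)
  have tail_event: "{\<omega>\<in>space M. s \<le> (\<Sum>t=1..T. X t \<omega>)} \<in> sets M"
    using measurable_Fs_imp_measurable[OF partial_sum_measurable[OF order_refl]] by measurable
  have "measure M {\<omega>\<in>space M. s < (\<Sum>t=1..T. X t \<omega>)} \<le> measure M {\<omega>\<in>space M. s \<le> (\<Sum>t=1..T. X t \<omega>)}"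
    using tail_event by (intro finite_measure_mono) auto
  also have "\<dots> \<le> exp (- s\<^sup>2 / (2 * real T * c\<^sup>2))"
    using True s by (intro azuma_hoeffding_ge) auto
  also have "\<dots> = p"
  proof -
    have "ln (1 / p) \<ge> 0"
      using p by simp
    then have "s\<^sup>2 = c\<^sup>2 * (2 * real T * ln (1 / p))"
      by (simp add: s_def power_mult_distrib)
    then show ?thesis
      using True p by (simp add: exp_minus ln_div)
  qed
  finally show ?thesis
    by (simp add: s_def)
next
  case False
  have "c \<ge> 0" if "T \<ge> 1"
  proof -
    obtain \<omega> where "\<omega> \<in> space M"
      using not_empty by blast
    then show ?thesis
      using bounded[of 1 \<omega>] that by force
  qed
  with False have "real T * c = 0"
    by force
  then have "{\<omega>\<in>space M. c * sqrt (2 * real T * ln (1 / p)) < (\<Sum>t=1..T. X t \<omega>)} = {}"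
    using partial_sum_abs_le[OF order_refl] by fastforce
  then show ?thesis
    using p by (simp only: measure_empty)
qed

end

section \<open>Mirror maps and Bregman divergences\<close>

lemma openin_weak_top_imp_open:
  assumes "openin (weak_top :: 'a::real_normed_vector topology) U"
  shows "open U"
proof -
  have "generate_topology_on {{x. blinfun_apply g x \<in> V} | (g :: 'a \<Rightarrow>\<^sub>L real) V. open V} U"
    using assms unfolding weak_top_def by (rule openin_topology_generated_by)
  then show ?thesis
  proof (induction rule: generate_topology_on.induct)
    case (Basis s)
    then obtain g :: "'a \<Rightarrow>\<^sub>L real" and V where "s = blinfun_apply g -` V" "open V"
      by auto
    moreover have "continuous_on UNIV (blinfun_apply g)"
      by (intro continuous_intros)
    ultimately show ?case
      using open_vimage by blast
  qed auto
qed

lemma topspace_weak_top [simp]: "topspace (weak_top :: 'a::real_normed_vector topology) = UNIV"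
proof -
  have "UNIV \<in> {{x. blinfun_apply g x \<in> V} | (g :: 'a \<Rightarrow>\<^sub>L real) V. open V}"
    by (rule CollectI, rule exI[of _ 0], rule exI[of _ UNIV]) auto
  then show ?thesis
    unfolding weak_top_def topology_generated_by_topspace by blast
qed

lemma closedin_weak_top_imp_closed:
  assumes "closedin (weak_top :: 'a::real_normed_vector topology) S"
  shows "closed S"
  using openin_weak_top_imp_open[of "- S"] assms
  by (simp add: closedin_def closed_def Compl_eq_Diff_UNIV)

lemma borel_measurable_weakly_lsc_comp:
  fixes \<Phi> :: "'a::real_normed_vector \<Rightarrow> real"
  assumes lsc: "\<forall>c. closedin weak_top {x\<in>W. \<Phi> x \<le> c}" and W: "closed W"
    and y: "y \<in> borel_measurable N" and yW: "\<And>\<omega>. \<omega> \<in> space N \<Longrightarrow> y \<omega> \<in> W"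
  shows "(\<lambda>\<omega>. \<Phi> (y \<omega>)) \<in> borel_measurable N"
proof -
  have "(\<lambda>x. if x \<in> W then \<Phi> x else 0) \<in> borel_measurable borel"
    unfolding borel_measurable_iff_le
  proof
    fix a :: real
    have "{x \<in> space borel. (if x \<in> W then \<Phi> x else 0) \<le> a}
        = {x\<in>W. \<Phi> x \<le> a} \<union> (if 0 \<le> a then - W else {})"
      by auto
    moreover have "closed {x\<in>W. \<Phi> x \<le> a}"
      using lsc closedin_weak_top_imp_closed by blast
    ultimately show "{x \<in> space borel. (if x \<in> W then \<Phi> x else 0) \<le> a} \<in> sets borel"
      using W by auto
  qed
  from measurable_comp[OF y this] show ?thesis
    by (rule measurable_cong[THEN iffD1, rotated]) (simp add: yW)
qed

lemma borel_measurable_gateaux_grad_comp: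
  fixes \<Phi> :: "'a::real_normed_vector \<Rightarrow> real"
  assumes lsc: "\<forall>c. closedin weak_top {x\<in>W. \<Phi> x \<le> c}" and W: "closed W" "convex W"
    and grad: "gateaux_grad_on W \<Phi> d\<Phi>" and u: "u \<in> W"
    and y: "y \<in> borel_measurable N" and yW: "\<And>\<omega>. \<omega> \<in> space N \<Longrightarrow> y \<omega> \<in> W"
  shows "(\<lambda>\<omega>. blinfun_apply (d\<Phi> (y \<omega>)) (u - y \<omega>)) \<in> borel_measurable N"
proof (rule borel_measurable_LIMSEQ_real)
  define s where "s n = inverse (real (Suc n))" for n
  fix \<omega> assume \<omega>: "\<omega> \<in> space N"
  have "((\<lambda>r. (\<Phi> (y \<omega> + r *\<^sub>R (u - y \<omega>)) - \<Phi> (y \<omega>)) / r)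
      \<longlongrightarrow> blinfun_apply (d\<Phi> (y \<omega>)) (u - y \<omega>)) (at_right 0)"
    using grad yW[OF \<omega>] u unfolding gateaux_grad_on_def by blast
  moreover have "filterlim s (at_right 0) sequentially"
    unfolding s_def by (rule tendsto_imp_filterlim_at_right[OF LIMSEQ_inverse_real_of_nat]) auto
  ultimately show "(\<lambda>n. (\<Phi> (y \<omega> + s n *\<^sub>R (u - y \<omega>)) - \<Phi> (y \<omega>)) / s n)
      \<longlonglongrightarrow> blinfun_apply (d\<Phi> (y \<omega>)) (u - y \<omega>)"
    by (rule filterlim_compose[unfolded o_def])
next
  define s where "s n = inverse (real (Suc n))" for n
  fix n
  have "0 \<le> s n" "s n \<le> 1"
    by (auto simp: s_def field_simps)
  then have "y \<omega> + s n *\<^sub>R (u - y \<omega>) \<in> W" if "\<omega> \<in> space N" for \<omega>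
    using convexD_alt[OF W(2) yW[OF that] u] by (simp add: algebra_simps)
  moreover have "(\<lambda>x. x + s n *\<^sub>R (u - x)) \<in> borel_measurable borel"
    by (intro borel_measurable_continuous_onI continuous_intros)
  from measurable_comp[OF y this] have "(\<lambda>\<omega>. y \<omega> + s n *\<^sub>R (u - y \<omega>)) \<in> borel_measurable N"
    by (simp add: o_def)
  ultimately have "(\<lambda>\<omega>. \<Phi> (y \<omega> + s n *\<^sub>R (u - y \<omega>))) \<in> borel_measurable N"
    by (intro borel_measurable_weakly_lsc_comp[OF lsc W(1)])
  moreover have "(\<lambda>\<omega>. \<Phi> (y \<omega>)) \<in> borel_measurable N"
    by (rule borel_measurable_weakly_lsc_comp[OF lsc W(1) y yW])
  ultimately show "(\<lambda>\<omega>. (\<Phi> (y \<omega> + s n *\<^sub>R (u - y \<omega>)) - \<Phi> (y \<omega>)) / s n) \<in> borel_measurable N"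
    by measurable
qed

lemma borel_measurable_bregman_comp:
  assumes "mirror_map W \<Phi> d\<Phi>" "closed W" "convex W" "u \<in> W"
    and "y \<in> borel_measurable N" "\<And>\<omega>. \<omega> \<in> space N \<Longrightarrow> y \<omega> \<in> W"
  shows "(\<lambda>\<omega>. bregman \<Phi> d\<Phi> u (y \<omega>)) \<in> borel_measurable N"
proof -
  have "(\<lambda>\<omega>. \<Phi> (y \<omega>)) \<in> borel_measurable N"
    "(\<lambda>\<omega>. blinfun_apply (d\<Phi> (y \<omega>)) (u - y \<omega>)) \<in> borel_measurable N"
    using assms borel_measurable_weakly_lsc_comp borel_measurable_gateaux_grad_comp
    unfolding mirror_map_def by blast+
  then show ?thesis
    unfolding bregman_def by measurable
qed

lemma bregman_ge_half_norm_sq: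
  assumes sc: "strongly_convex_on1 W \<Phi>" and grad: "gateaux_grad_on W \<Phi> d\<Phi>"
    and x: "x \<in> W" and y: "y \<in> W"
  shows "(norm (x - y))\<^sup>2 / 2 \<le> bregman \<Phi> d\<Phi> x y"
proof -
  let ?q = "\<lambda>r. (\<Phi> (y + r *\<^sub>R (x - y)) - \<Phi> y) / r"
  let ?b = "\<lambda>r. \<Phi> x - \<Phi> y - (1 - r) / 2 * (norm (x - y))\<^sup>2"
  have "(?q \<longlongrightarrow> blinfun_apply (d\<Phi> y) (x - y)) (at_right 0)"
    using grad x y unfolding gateaux_grad_on_def by blast
  moreover have "(?b \<longlongrightarrow> ?b 0) (at_right 0)"
    by (intro tendsto_intros) simp
  moreover have "eventually (\<lambda>r. ?q r \<le> ?b r) (at_right 0)"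
    using eventually_at_right_real[OF zero_less_one]
  proof (rule eventually_mono)
    fix r :: real assume r: "r \<in> {0<..<1}"
    have "\<Phi> (r *\<^sub>R x + (1 - r) *\<^sub>R y) \<le> r * \<Phi> x + (1 - r) * \<Phi> y - r * (1 - r) / 2 * (norm (x - y))\<^sup>2"
      using sc x y r unfolding strongly_convex_on1_def by auto
    moreover have "y + r *\<^sub>R (x - y) = r *\<^sub>R x + (1 - r) *\<^sub>R y"
      by (simp add: algebra_simps)
    ultimately have "\<Phi> (y + r *\<^sub>R (x - y)) - \<Phi> y \<le> r * ?b r"
      by (simp add: algebra_simps)
    then show "?q r \<le> ?b r"
      using r by (simp add: divide_le_eq mult.commute)
  qed
  ultimately have "blinfun_apply (d\<Phi> y) (x - y) \<le> ?b 0"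
    by (intro tendsto_le[OF trivial_limit_at_right_real])
  then show ?thesis
    unfolding bregman_def by simp
qed

lemma bregman_three_point_ineq:
  fixes U :: "'a::real_normed_vector \<Rightarrow>\<^sub>L real"
  assumes grad: "gateaux_grad_on W \<Phi> d\<Phi>" and W: "convex W"
    and y: "y \<in> W" and p: "p \<in> W" and u: "u \<in> W"
    and argmin: "\<forall>u\<in>W. \<eta> * U p + bregman \<Phi> d\<Phi> p y \<le> \<eta> * U u + bregman \<Phi> d\<Phi> u y"
  shows "\<eta> * U (p - u) \<le> bregman \<Phi> d\<Phi> u y - bregman \<Phi> d\<Phi> u p - bregman \<Phi> d\<Phi> p y"
proof -
  let ?q = "\<lambda>r. \<eta> * U (u - p) + (\<Phi> (p + r *\<^sub>R (u - p)) - \<Phi> p) / r - d\<Phi> y (u - p)"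
  have "((\<lambda>r. (\<Phi> (p + r *\<^sub>R (u - p)) - \<Phi> p) / r) \<longlongrightarrow> d\<Phi> p (u - p)) (at_right 0)"
    using grad u p unfolding gateaux_grad_on_def by blast
  then have "(?q \<longlongrightarrow> \<eta> * U (u - p) + d\<Phi> p (u - p) - d\<Phi> y (u - p)) (at_right 0)"
    by (intro tendsto_intros)
  moreover have "eventually (\<lambda>r. 0 \<le> ?q r) (at_right 0)"
    using eventually_at_right_real[OF zero_less_one]
  proof (rule eventually_mono)
    fix r :: real assume r: "r \<in> {0<..<1}"
    have "p + r *\<^sub>R (u - p) \<in> W"
      using convexD_alt[OF W p u, of r] r by (simp add: algebra_simps)
    then have "\<eta> * U p + bregman \<Phi> d\<Phi> p y
        \<le> \<eta> * U (p + r *\<^sub>R (u - p)) + bregman \<Phi> d\<Phi> (p + r *\<^sub>R (u - p)) y"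
      using argmin by blast
    then have "0 \<le> r * (\<eta> * U (u - p)) + (\<Phi> (p + r *\<^sub>R (u - p)) - \<Phi> p) - r * d\<Phi> y (u - p)"
      unfolding bregman_def by (simp add: blinfun.bilinear_simps algebra_simps)
    also have "\<dots> = r * ?q r"
      using r by (simp add: field_simps)
    finally show "0 \<le> ?q r"
      using r by (simp add: zero_le_mult_iff)
  qed
  ultimately have "0 \<le> \<eta> * U (u - p) + d\<Phi> p (u - p) - d\<Phi> y (u - p)"
    by (rule tendsto_lowerbound[OF _ _ trivial_limit_at_right_real])
  moreover have "bregman \<Phi> d\<Phi> u y - bregman \<Phi> d\<Phi> u p - bregman \<Phi> d\<Phi> p y = d\<Phi> p (u - p) - d\<Phi> y (u - p)"
    unfolding bregman_def by (simp add: blinfun.bilinear_simps algebra_simps)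
  ultimately show ?thesis
    by (simp add: blinfun.bilinear_simps algebra_simps)
qed

lemma mirror_descent_step_ineq:
  fixes U :: "'a::real_normed_vector \<Rightarrow>\<^sub>L real"
  assumes sc: "strongly_convex_on1 W \<Phi>" and grad: "gateaux_grad_on W \<Phi> d\<Phi>" and W: "convex W"
    and y: "y \<in> W" and p: "p \<in> W" and u: "u \<in> W" and \<eta>: "\<eta> > 0"
    and argmin: "\<forall>u\<in>W. \<eta> * U p + bregman \<Phi> d\<Phi> p y \<le> \<eta> * U u + bregman \<Phi> d\<Phi> u y"
  shows "\<eta> * U (y - u) \<le> bregman \<Phi> d\<Phi> u y - bregman \<Phi> d\<Phi> u p + \<eta>\<^sup>2 * (norm U)\<^sup>2 / 2"
proof -
  have "\<eta> * U (y - p) \<le> \<eta> * (norm U * norm (y - p))"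
    using \<eta> norm_blinfun[of U "y - p"] by (intro mult_left_mono) auto
  also have "\<dots> \<le> (norm (y - p))\<^sup>2 / 2 + \<eta>\<^sup>2 * (norm U)\<^sup>2 / 2"
    using sum_squares_bound[of "\<eta> * norm U" "norm (y - p)"]
    by (simp add: power_mult_distrib field_simps)
  also have "(norm (y - p))\<^sup>2 / 2 \<le> bregman \<Phi> d\<Phi> p y"
    using bregman_ge_half_norm_sq[OF sc grad p y] by (simp add: norm_minus_commute)
  finally have "\<eta> * U (y - p) \<le> bregman \<Phi> d\<Phi> p y + \<eta>\<^sup>2 * (norm U)\<^sup>2 / 2"
    by simp
  moreover have "\<eta> * U (y - u) = \<eta> * U (p - u) + \<eta> * U (y - p)"
    by (simp add: blinfun.bilinear_simps algebra_simps)
  ultimately show ?thesis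
    using bregman_three_point_ineq[OF grad W y p u argmin] by linarith
qed

lemma bregman_nonneg:
  assumes "mirror_map W \<Phi> d\<Phi>" "x \<in> W" "y \<in> W"
  shows "0 \<le> bregman \<Phi> d\<Phi> x y"
  using bregman_ge_half_norm_sq[of W \<Phi> d\<Phi> x y] assms unfolding mirror_map_def
  by (meson order.trans zero_le_divide_iff zero_le_power2 zero_le_numeral)

section \<open>Averaging the accepted iterates\<close>

lemma convex_on_mean_le:
  fixes x :: "'i \<Rightarrow> 'a::real_vector"
  assumes "convex_on W f" "finite S" "S \<noteq> {}" "\<And>t. t \<in> S \<Longrightarrow> x t \<in> W"
  shows "f ((1 / real (card S)) *\<^sub>R (\<Sum>t\<in>S. x t)) \<le> (\<Sum>t\<in>S. f (x t)) / real (card S)"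
proof -
  have "f (\<Sum>t\<in>S. (1 / real (card S)) *\<^sub>R x t) \<le> (\<Sum>t\<in>S. (1 / real (card S)) * f (x t))"
    using assms by (intro convex_on_sum) auto
  then show ?thesis
    by (simp add: scaleR_sum_right sum_divide_distrib)
qed

lemma sum_le_card_mult_subset:
  fixes L :: "'i \<Rightarrow> real"
  assumes "finite I" "I \<noteq> {}" "S \<subseteq> I" "\<And>t. t \<in> I - S \<Longrightarrow> \<kappa> < L t"
    and "sum L I \<le> real (card I) * \<kappa>"
  shows "S \<noteq> {}" "sum L S \<le> real (card S) * \<kappa>"
proof -
  have fin: "finite S" "finite (I - S)"
    using assms(1,3) finite_subset by auto
  have split: "sum L I = sum L S + sum L (I - S)" "card I = card S + card (I - S)"
    using assms(1,3) fin by (auto simp: sum.subset_diff card_Diff_subset card_mono)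
  have "real (card (I - S)) * \<kappa> \<le> sum L (I - S)"
    using sum_mono[of "I - S" "\<lambda>_. \<kappa>" L] assms(4) by fastforce
  with split assms(5) show "sum L S \<le> real (card S) * \<kappa>"
    by (simp add: distrib_right)
  show "S \<noteq> {}"
  proof
    assume "S = {}"
    then have "real (card I) * \<kappa> < sum L I"
      using sum_strict_mono[of I "\<lambda>_. \<kappa>" L] assms by fastforce
    with assms(5) show False
      by simp
  qed
qed

lemma accepted_average_bounds:
  fixes x :: "'i \<Rightarrow> 'a::real_vector"
  assumes f: "convex_on W f" and h: "convex_on W h"
    and I: "finite I" "I \<noteq> {}" and xW: "\<And>t. t \<in> I \<Longrightarrow> x t \<in> W"
    and feasible: "h wstar \<le> 0"
    and err: "\<And>t. t \<in> I \<Longrightarrow> \<bar>v t - h (x t)\<bar> \<le> Err"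
    and regret: "(\<Sum>t\<in>I. if v t \<le> \<epsilon> then f (x t) - f wstar else h (x t) - h wstar)
      \<le> real (card I) * (\<epsilon> - Err)"
  defines "S \<equiv> {t\<in>I. v t \<le> \<epsilon>}"
  defines "xbar \<equiv> (1 / real (card S)) *\<^sub>R (\<Sum>t\<in>S. x t)"
  shows "S \<noteq> {}" "f xbar - f wstar \<le> \<epsilon> - Err" "h xbar \<le> \<epsilon> + Err"
proof -
  define L where "L t = (if v t \<le> \<epsilon> then f (x t) - f wstar else h (x t) - h wstar)" for t
  have fin: "finite S" and SW: "\<And>t. t \<in> S \<Longrightarrow> x t \<in> W"
    using I xW unfolding S_def by auto
  have "\<epsilon> - Err < L t" if "t \<in> I - S" for t
    using that err[of t] feasible unfolding L_def S_def by auto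
  then have S: "S \<noteq> {}" and "sum L S \<le> real (card S) * (\<epsilon> - Err)"
    using sum_le_card_mult_subset[OF I, of S "\<epsilon> - Err" L] regret
    unfolding L_def S_def by auto
  moreover have "sum L S = (\<Sum>t\<in>S. f (x t)) - real (card S) * f wstar"
    unfolding L_def S_def by (simp add: sum_subtractf)
  ultimately have "(\<Sum>t\<in>S. f (x t)) / real (card S) - f wstar \<le> \<epsilon> - Err"
    using fin by (simp add: field_simps card_gt_0_iff)
  then show "f xbar - f wstar \<le> \<epsilon> - Err"
    using convex_on_mean_le[OF f fin S, of x, OF SW] unfolding xbar_def by linarith
  have "(\<Sum>t\<in>S. h (x t)) \<le> (\<Sum>t\<in>S. \<epsilon> + Err)"
    using err unfolding S_def by (intro sum_mono) force
  then have "(\<Sum>t\<in>S. h (x t)) / real (card S) \<le> \<epsilon> + Err"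
    using fin S by (simp add: field_simps card_gt_0_iff)
  then show "h xbar \<le> \<epsilon> + Err"
    using convex_on_mean_le[OF h fin S, of x, OF SW] unfolding xbar_def by linarith
  show "S \<noteq> {}"
    by (rule S)
qed

section \<open>The switching gradient method\<close>

lemma (in prob_space) prob_Int_ge:
  assumes "A \<in> events" "B \<in> events"
  shows "prob A + prob B - 1 \<le> prob (A \<inter> B)"
  using measure_Un3[of A M B] prob_le_1[of "A \<union> B"] assms by (simp add: fmeasurable_eq_sets)

lemma cond_exp_in_subdiff_le:
  fixes x :: "'w \<Rightarrow> 'a::real_normed_vector"
  assumes sg: "cond_exp_in M F Y (\<lambda>\<omega>. subdiff_on W f (x \<omega>))" and u: "u \<in> W"
    and meas: "(\<lambda>\<omega>. if P \<omega> then x \<omega> - u else 0) \<in> borel_measurable F"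
    and bdd: "bounded ((\<lambda>\<omega>. if P \<omega> then x \<omega> - u else 0) ` space M)"
  shows "integrable M (\<lambda>\<omega>. Y \<omega> (if P \<omega> then x \<omega> - u else 0))"
    and "AE \<omega> in M. (if P \<omega> then f (x \<omega>) - f u else 0)
      \<le> real_cond_exp M F (\<lambda>\<omega>. Y \<omega> (if P \<omega> then x \<omega> - u else 0)) \<omega>"
proof -
  obtain g where g: "AE \<omega> in M. g \<omega> \<in> subdiff_on W f (x \<omega>)"
    and integrable: "integrable M (\<lambda>\<omega>. Y \<omega> (if P \<omega> then x \<omega> - u else 0))"
    and cond_exp: "AE \<omega> in M. real_cond_exp M F (\<lambda>\<omega>. Y \<omega> (if P \<omega> then x \<omega> - u else 0)) \<omega>
      = g \<omega> (if P \<omega> then x \<omega> - u else 0)"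
    using sg meas bdd unfolding cond_exp_in_def by blast
  show "integrable M (\<lambda>\<omega>. Y \<omega> (if P \<omega> then x \<omega> - u else 0))"
    by (rule integrable)
  show "AE \<omega> in M. (if P \<omega> then f (x \<omega>) - f u else 0)
      \<le> real_cond_exp M F (\<lambda>\<omega>. Y \<omega> (if P \<omega> then x \<omega> - u else 0)) \<omega>"
    using g cond_exp
  proof eventually_elim
    case (elim \<omega>)
    have "f (x \<omega>) + g \<omega> (u - x \<omega>) \<le> f u"
      using elim(1) u unfolding subdiff_on_def by blast
    then have "f (x \<omega>) - f u \<le> g \<omega> (x \<omega> - u)"
      by (simp add: blinfun.diff_right)
    with elim(2) show ?case
      by (simp add: blinfun.zero_right)
  qed
qed

locale switching_gradient = filtered_prob_space M Flt for M :: "'w measure" and Flt +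
  fixes W :: "'a::banach set" and \<Phi> :: "'a \<Rightarrow> real" and d\<Phi> :: "'a \<Rightarrow> ('a \<Rightarrow>\<^sub>L real)"
    and f h :: "'a \<Rightarrow> real" and wstar :: 'a
    and F' H' :: "'a \<Rightarrow> 'z \<Rightarrow> ('a \<Rightarrow>\<^sub>L real)"
    and w :: "nat \<Rightarrow> 'w \<Rightarrow> 'a" and v :: "nat \<Rightarrow> 'w \<Rightarrow> real" and \<zeta> :: "nat \<Rightarrow> 'w \<Rightarrow> 'z"
    and D G \<eta> \<epsilon> :: real and T :: nat
  assumes closed_W: "closed W" and convex_W: "convex W"
    and mirror: "mirror_map W \<Phi> d\<Phi>"
    and wstar: "wstar \<in> W" "h wstar \<le> 0"
    and diam: "\<And>u u'. u \<in> W \<Longrightarrow> u' \<in> W \<Longrightarrow> norm (u - u') \<le> D"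
    and \<eta>: "\<eta> > 0" and T: "T \<ge> 1"
    and meas_w: "\<And>t. t \<in> {1..T} \<Longrightarrow> w t \<in> borel_measurable (Flt t)"
    and meas_v: "\<And>t. t \<in> {1..T} \<Longrightarrow> v t \<in> borel_measurable (Flt t)"
    and init: "\<And>\<omega>. \<omega> \<in> space M \<Longrightarrow> w 1 \<omega> \<in> W"
    and step: "\<And>t \<omega>. t \<in> {1..T} \<Longrightarrow> \<omega> \<in> space M \<Longrightarrow>
        w (Suc t) \<omega> \<in> W \<and>
        (\<forall>u\<in>W. \<eta> * blinfun_apply (if v t \<omega> \<le> \<epsilon> then F' (w t \<omega>) (\<zeta> t \<omega>) else H' (w t \<omega>) (\<zeta> t \<omega>)) (w (Suc t) \<omega>)
                  + bregman \<Phi> d\<Phi> (w (Suc t) \<omega>) (w t \<omega>)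
              \<le> \<eta> * blinfun_apply (if v t \<omega> \<le> \<epsilon> then F' (w t \<omega>) (\<zeta> t \<omega>) else H' (w t \<omega>) (\<zeta> t \<omega>)) u
                  + bregman \<Phi> d\<Phi> u (w t \<omega>))"
    and subgrad_F: "\<And>t. t \<in> {1..T} \<Longrightarrow>
      cond_exp_in M (Flt t) (\<lambda>\<omega>. F' (w t \<omega>) (\<zeta> t \<omega>)) (\<lambda>\<omega>. subdiff_on W f (w t \<omega>))"
    and subgrad_H: "\<And>t. t \<in> {1..T} \<Longrightarrow>
      cond_exp_in M (Flt t) (\<lambda>\<omega>. H' (w t \<omega>) (\<zeta> t \<omega>)) (\<lambda>\<omega>. subdiff_on W h (w t \<omega>))"
    and bounded_F: "\<And>t. t \<in> {1..T} \<Longrightarrow> AE \<omega> in M. \<forall>u\<in>W. norm (F' u (\<zeta> t \<omega>)) \<le> G"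
    and bounded_H: "\<And>t. t \<in> {1..T} \<Longrightarrow> AE \<omega> in M. \<forall>u\<in>W. norm (H' u (\<zeta> t \<omega>)) \<le> G"
begin

definition switched_grad :: "nat \<Rightarrow> 'w \<Rightarrow> 'a \<Rightarrow>\<^sub>L real" where
  "switched_grad t \<omega> = (if v t \<omega> \<le> \<epsilon> then F' (w t \<omega>) (\<zeta> t \<omega>) else H' (w t \<omega>) (\<zeta> t \<omega>))"

definition switched_loss :: "nat \<Rightarrow> 'w \<Rightarrow> real" where
  "switched_loss t \<omega> = (if v t \<omega> \<le> \<epsilon> then f (w t \<omega>) - f wstar else h (w t \<omega>) - h wstar)"

definition linearized_gap :: "nat \<Rightarrow> 'w \<Rightarrow> real" where
  "linearized_gap t \<omega> = switched_grad t \<omega> (w t \<omega> - wstar)"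

definition cond_linearized_gap :: "nat \<Rightarrow> 'w \<Rightarrow> real" where
  "cond_linearized_gap t = real_cond_exp M (Flt t) (linearized_gap t)"

text \<open>The iterate after the horizon need not be measurable, so the potential is cut off there;
  as Bregman divergences are nonnegative this only weakens the bounds below.\<close>
definition potential :: "nat \<Rightarrow> 'w \<Rightarrow> real" where
  "potential k \<omega> = (if k \<le> T then bregman \<Phi> d\<Phi> wstar (w k \<omega>) else 0)"

definition gap_bound :: "nat \<Rightarrow> 'w \<Rightarrow> real" where
  "gap_bound t \<omega> = (potential t \<omega> - potential (Suc t) \<omega>) / \<eta> + \<eta> * G\<^sup>2 / 2"

text \<open>Nothing is assumed about the measurability of F' and H', so the linearized gap need not be
  adapted; the martingale differences are built from its adapted upper bound gap_bound instead,
  clipped to keep them bounded.\<close>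
definition increment :: "nat \<Rightarrow> 'w \<Rightarrow> real" where
  "increment t \<omega> = min (2 * G * D) (max (- (2 * G * D)) (cond_linearized_gap t \<omega> - gap_bound t \<omega>))"

lemma iterate_in_W:
  assumes "t \<in> {1..Suc T}" "\<omega> \<in> space M"
  shows "w t \<omega> \<in> W"
  using assms
proof (induction t)
  case (Suc t)
  then show ?case
    using init step by (cases "t = 0") auto
qed simp

lemma D_nonneg: "0 \<le> D"
  using diam[OF wstar(1) wstar(1)] by simp

lemma G_nonneg: "0 \<le> G"
proof -
  have "1 \<in> {1..T}"
    using T by simp
  from bounded_F[OF this] have "AE \<omega> in M. 0 \<le> G"
  proof eventually_elim
    case (elim \<omega>)
    then show ?case
      using wstar(1) norm_ge_zero order.trans by blast
  qed
  then show ?thesis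
    by simp
qed

lemma switched_grad_norm_le:
  assumes t: "t \<in> {1..T}"
  shows "AE \<omega> in M. norm (switched_grad t \<omega>) \<le> G"
  using AE_space bounded_F[OF t] bounded_H[OF t]
proof eventually_elim
  case (elim \<omega>)
  then show ?case
    using iterate_in_W[of t \<omega>] t unfolding switched_grad_def by auto
qed

lemma iterate_dist_le:
  "t \<in> {1..Suc T} \<Longrightarrow> \<omega> \<in> space M \<Longrightarrow> norm (w t \<omega> - wstar) \<le> D"
  using diam iterate_in_W wstar(1) by blast

lemma linearized_gap_abs_le:
  assumes t: "t \<in> {1..T}"
  shows "AE \<omega> in M. \<bar>linearized_gap t \<omega>\<bar> \<le> G * D"
  using AE_space switched_grad_norm_le[OF t]
proof eventually_elim
  case (elim \<omega>)
  have "\<bar>linearized_gap t \<omega>\<bar> \<le> norm (switched_grad t \<omega>) * norm (w t \<omega> - wstar)"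
    unfolding linearized_gap_def using norm_blinfun real_norm_def by metis
  also have "\<dots> \<le> G * D"
    using elim iterate_dist_le[of t \<omega>] t G_nonneg by (intro mult_mono) auto
  finally show ?case .
qed

lemma linearized_gap_le_gap_bound:
  assumes t: "t \<in> {1..T}" and \<omega>: "\<omega> \<in> space M" and grad: "norm (switched_grad t \<omega>) \<le> G"
  shows "linearized_gap t \<omega> \<le> gap_bound t \<omega>"
proof -
  have y: "w t \<omega> \<in> W" and p: "w (Suc t) \<omega> \<in> W"
    using iterate_in_W t \<omega> by auto
  have "\<eta> * linearized_gap t \<omega> \<le> bregman \<Phi> d\<Phi> wstar (w t \<omega>) - bregman \<Phi> d\<Phi> wstar (w (Suc t) \<omega>)
      + \<eta>\<^sup>2 * (norm (switched_grad t \<omega>))\<^sup>2 / 2"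
    unfolding linearized_gap_def
    using mirror step[OF t \<omega>] unfolding mirror_map_def switched_grad_def
    by (intro mirror_descent_step_ineq[OF _ _ convex_W y p wstar(1) \<eta>]) auto
  also have "\<dots> \<le> potential t \<omega> - potential (Suc t) \<omega> + \<eta>\<^sup>2 * G\<^sup>2 / 2"
    using t bregman_nonneg[OF mirror wstar(1) p] grad
    by (intro add_mono divide_right_mono mult_left_mono power_mono) (auto simp: potential_def)
  also have "\<dots> = \<eta> * gap_bound t \<omega>"
    using \<eta> by (simp add: gap_bound_def field_simps power2_eq_square)
  finally show ?thesis
    using \<eta> by simp
qed

lemma linearized_gap_split:
  "linearized_gap t = (\<lambda>\<omega>. F' (w t \<omega>) (\<zeta> t \<omega>) (if v t \<omega> \<le> \<epsilon> then w t \<omega> - wstar else 0)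
     + H' (w t \<omega>) (\<zeta> t \<omega>) (if \<not> v t \<omega> \<le> \<epsilon> then w t \<omega> - wstar else 0))"
  by (auto simp: linearized_gap_def switched_grad_def blinfun.zero_right)

lemma restricted_displacement:
  assumes t: "t \<in> {1..T}" and P: "{\<omega>\<in>space (Flt t). P \<omega>} \<in> sets (Flt t)"
  shows "(\<lambda>\<omega>. if P \<omega> then w t \<omega> - wstar else 0) \<in> borel_measurable (Flt t)"
    and "bounded ((\<lambda>\<omega>. if P \<omega> then w t \<omega> - wstar else 0) ` space M)"
proof -
  have "(\<lambda>x. x - wstar) \<in> borel_measurable borel"
    by (intro borel_measurable_continuous_onI continuous_intros)
  from measurable_comp[OF meas_w[OF t] this]
  show "(\<lambda>\<omega>. if P \<omega> then w t \<omega> - wstar else 0) \<in> borel_measurable (Flt t)"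
    by (intro measurable_If[OF _ _ P]) (simp_all add: o_def)
  show "bounded ((\<lambda>\<omega>. if P \<omega> then w t \<omega> - wstar else 0) ` space M)"
    unfolding bounded_iff using iterate_dist_le t D_nonneg by (intro exI[of _ D]) auto
qed

lemma linearized_gap_cond_exp:
  assumes t: "t \<in> {1..T}"
  shows "integrable M (linearized_gap t)"
    and "AE \<omega> in M. switched_loss t \<omega> \<le> cond_linearized_gap t \<omega>"
proof -
  interpret sigma_finite_subalgebra M "Flt t"
    by (rule sigma_finite_subalgebra_Fs)
  have accepted: "{\<omega>\<in>space (Flt t). v t \<omega> \<le> \<epsilon>} \<in> sets (Flt t)"
    using meas_v[OF t] unfolding borel_measurable_iff_le by blast
  then have rejected: "{\<omega>\<in>space (Flt t). \<not> v t \<omega> \<le> \<epsilon>} \<in> sets (Flt t)"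
    by (rule sets.sets_Collect_neg)
  note F = cond_exp_in_subdiff_le[OF subgrad_F[OF t] wstar(1) restricted_displacement[OF t accepted]]
  note H = cond_exp_in_subdiff_le[OF subgrad_H[OF t] wstar(1) restricted_displacement[OF t rejected]]
  show "integrable M (linearized_gap t)"
    unfolding linearized_gap_split using F(1) H(1) by (rule Bochner_Integration.integrable_add)
  have "AE \<omega> in M. cond_linearized_gap t \<omega>
      = real_cond_exp M (Flt t) (\<lambda>\<omega>. F' (w t \<omega>) (\<zeta> t \<omega>) (if v t \<omega> \<le> \<epsilon> then w t \<omega> - wstar else 0)) \<omega>
      + real_cond_exp M (Flt t) (\<lambda>\<omega>. H' (w t \<omega>) (\<zeta> t \<omega>) (if \<not> v t \<omega> \<le> \<epsilon> then w t \<omega> - wstar else 0)) \<omega>"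
    unfolding cond_linearized_gap_def linearized_gap_split by (rule real_cond_exp_add[OF F(1) H(1)])
  with F(2) H(2) show "AE \<omega> in M. switched_loss t \<omega> \<le> cond_linearized_gap t \<omega>"
    by eventually_elim (simp add: switched_loss_def split: if_splits)
qed

lemma cond_linearized_gap_abs_le:
  assumes t: "t \<in> {1..T}"
  shows "AE \<omega> in M. \<bar>cond_linearized_gap t \<omega>\<bar> \<le> G * D"
proof -
  interpret sigma_finite_subalgebra M "Flt t"
    by (rule sigma_finite_subalgebra_Fs)
  have "AE \<omega> in M. linearized_gap t \<omega> \<le> G * D" "AE \<omega> in M. - (G * D) \<le> linearized_gap t \<omega>"
    using linearized_gap_abs_le[OF t] by (eventually_elim, simp)+
  then have "AE \<omega> in M. cond_linearized_gap t \<omega> \<le> G * D" "AE \<omega> in M. - (G * D) \<le> cond_linearized_gap t \<omega>"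
    unfolding cond_linearized_gap_def using linearized_gap_cond_exp(1)[OF t]
    by (blast intro: real_cond_exp_le_c real_cond_exp_ge_c)+
  then show ?thesis
    by eventually_elim simp
qed

lemma potential_measurable:
  assumes "1 \<le> k"
  shows "potential k \<in> borel_measurable (Flt k)"
proof (cases "k \<le> T")
  case True
  with assms have "(\<lambda>\<omega>. bregman \<Phi> d\<Phi> wstar (w k \<omega>)) \<in> borel_measurable (Flt k)"
    using iterate_in_W by (intro borel_measurable_bregman_comp[OF mirror closed_W convex_W wstar(1) meas_w]) auto
  with True show ?thesis
    by (simp add: potential_def[abs_def])
qed (simp add: potential_def[abs_def])

lemma increment_measurable:
  assumes t: "t \<in> {1..T}"
  shows "increment t \<in> borel_measurable (Flt (Suc t))"
proof -
  have "cond_linearized_gap t \<in> borel_measurable (Flt (Suc t))"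
    unfolding cond_linearized_gap_def by (rule measurable_Fs_mono[of t]) auto
  moreover have "potential t \<in> borel_measurable (Flt (Suc t))"
    using t by (intro measurable_Fs_mono[of t, OF _ potential_measurable]) auto
  moreover have "potential (Suc t) \<in> borel_measurable (Flt (Suc t))"
    by (rule potential_measurable) simp
  ultimately show ?thesis
    unfolding increment_def[abs_def] gap_bound_def by measurable
qed

lemma increment_abs_le: "\<bar>increment t \<omega>\<bar> \<le> 2 * G * D"
proof -
  have "0 \<le> 2 * G * D"
    using G_nonneg D_nonneg by simp
  then show ?thesis
    unfolding increment_def by linarith
qed

lemma increment_bounds:
  assumes t: "t \<in> {1..T}"
  shows "AE \<omega> in M. cond_linearized_gap t \<omega> - gap_bound t \<omega> \<le> increment t \<omega>
    \<and> increment t \<omega> \<le> cond_linearized_gap t \<omega> - linearized_gap t \<omega>"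
  using AE_space switched_grad_norm_le[OF t] linearized_gap_abs_le[OF t] cond_linearized_gap_abs_le[OF t]
proof eventually_elim
  case (elim \<omega>)
  then have "linearized_gap t \<omega> \<le> gap_bound t \<omega>"
    using linearized_gap_le_gap_bound[OF t] by blast
  with elim(3,4) show ?case
    unfolding increment_def by linarith
qed

lemma increment_supermartingale:
  assumes t: "t \<in> {1..T}" and \<psi>: "\<psi> \<in> borel_measurable (Flt t)"
    and \<psi>_bounds: "\<And>\<omega>. \<omega> \<in> space M \<Longrightarrow> 0 \<le> \<psi> \<omega> \<and> \<psi> \<omega> \<le> K"
  shows "(\<integral>\<omega>. \<psi> \<omega> * increment t \<omega> \<partial>M) \<le> 0"
proof -
  interpret sigma_finite_subalgebra M "Flt t"
    by (rule sigma_finite_subalgebra_Fs)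
  have \<psi>_M: "\<psi> \<in> borel_measurable M"
    by (rule measurable_Fs_imp_measurable[OF \<psi>])
  have int_gap: "integrable M (linearized_gap t)"
    by (rule linearized_gap_cond_exp(1)[OF t])
  have int_\<psi>_gap: "integrable M (\<lambda>\<omega>. \<psi> \<omega> * linearized_gap t \<omega>)"
  proof (rule integrable_const_bound[where B = "K * (G * D)"])
    show "AE \<omega> in M. norm (\<psi> \<omega> * linearized_gap t \<omega>) \<le> K * (G * D)"
      using AE_space linearized_gap_abs_le[OF t]
    proof eventually_elim
      case (elim \<omega>)
      then show ?case
        using \<psi>_bounds[OF elim(1)] by (auto simp: abs_mult intro!: mult_mono)
    qed
  qed (use \<psi>_M int_gap in simp)
  note cond = real_cond_exp_intg[OF int_\<psi>_gap \<psi> borel_measurable_integrable[OF int_gap]]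
  have int_\<psi>_incr: "integrable M (\<lambda>\<omega>. \<psi> \<omega> * increment t \<omega>)"
  proof (rule integrable_const_bound[where B = "K * (2 * G * D)"])
    show "AE \<omega> in M. norm (\<psi> \<omega> * increment t \<omega>) \<le> K * (2 * G * D)"
    proof (intro AE_I2)
      fix \<omega> assume "\<omega> \<in> space M"
      then show "norm (\<psi> \<omega> * increment t \<omega>) \<le> K * (2 * G * D)"
        using \<psi>_bounds[of \<omega>] increment_abs_le[of t \<omega>] by (auto simp: abs_mult intro!: mult_mono)
    qed
  qed (use \<psi>_M measurable_Fs_imp_measurable[OF increment_measurable[OF t]] in simp)
  have "(\<integral>\<omega>. \<psi> \<omega> * increment t \<omega> \<partial>M)
      \<le> (\<integral>\<omega>. \<psi> \<omega> * cond_linearized_gap t \<omega> - \<psi> \<omega> * linearized_gap t \<omega> \<partial>M)"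
  proof (rule integral_mono_AE[OF int_\<psi>_incr])
    show "integrable M (\<lambda>\<omega>. \<psi> \<omega> * cond_linearized_gap t \<omega> - \<psi> \<omega> * linearized_gap t \<omega>)"
      using cond(1) int_\<psi>_gap unfolding cond_linearized_gap_def by simp
    show "AE \<omega> in M. \<psi> \<omega> * increment t \<omega> \<le> \<psi> \<omega> * cond_linearized_gap t \<omega> - \<psi> \<omega> * linearized_gap t \<omega>"
      using AE_space increment_bounds[OF t]
    proof eventually_elim
      case (elim \<omega>)
      then show ?case
        using \<psi>_bounds[OF elim(1)] by (auto simp: right_diff_distrib[symmetric] intro: mult_left_mono)
    qed
  qed
  also have "\<dots> = 0"
    using cond int_\<psi>_gap unfolding cond_linearized_gap_def by simp
  finally show ?thesis .
qed

sublocale increments: bounded_supermartingale_differences M Flt increment T "2 * G * D"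
  using increment_measurable increment_abs_le increment_supermartingale
  by unfold_locales blast+

lemma sum_gap_bound:
  assumes "\<omega> \<in> space M"
  shows "(\<Sum>t=1..T. gap_bound t \<omega>) = bregman \<Phi> d\<Phi> wstar (w 1 \<omega>) / \<eta> + real T * (\<eta> * G\<^sup>2 / 2)"
proof -
  have "(\<Sum>t=1..T. potential t \<omega> - potential (Suc t) \<omega>) = potential 1 \<omega> - potential (Suc T) \<omega>"
    using sum_Suc_diff[of 1 T "\<lambda>k. - potential k \<omega>"] by simp
  then show ?thesis
    using T by (simp add: gap_bound_def sum.distrib potential_def flip: sum_divide_distrib)
qed

lemma switched_loss_sum_le:
  "AE \<omega> in M. (\<Sum>t=1..T. switched_loss t \<omega>)
     \<le> bregman \<Phi> d\<Phi> wstar (w 1 \<omega>) / \<eta> + real T * (\<eta> * G\<^sup>2 / 2) + (\<Sum>t=1..T. increment t \<omega>)"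
proof -
  have "AE \<omega> in M. \<forall>t\<in>{1..T}. switched_loss t \<omega> \<le> gap_bound t \<omega> + increment t \<omega>"
  proof (rule eventually_ball_finite[OF finite_atLeastAtMost], intro ballI)
    fix t assume t: "t \<in> {1..T}"
    show "AE \<omega> in M. switched_loss t \<omega> \<le> gap_bound t \<omega> + increment t \<omega>"
      using linearized_gap_cond_exp(2)[OF t] increment_bounds[OF t] by eventually_elim auto
  qed
  with AE_space show ?thesis
  proof eventually_elim
    case (elim \<omega>)
    then have "(\<Sum>t=1..T. switched_loss t \<omega>) \<le> (\<Sum>t=1..T. gap_bound t \<omega> + increment t \<omega>)"
      by (intro sum_mono) blast
    with sum_gap_bound[OF elim(1)] show ?case
      by (simp add: sum.distrib)
  qed
qed

lemma switched_loss_sum_high_prob: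
  assumes p: "0 < p" "p \<le> 1" and R: "\<And>u. u \<in> W \<Longrightarrow> bregman \<Phi> d\<Phi> wstar u \<le> R\<^sup>2 / 2"
  shows "\<exists>A\<in>sets M. 1 - p \<le> measure M A \<and> (\<forall>\<omega>\<in>A. (\<Sum>t=1..T. switched_loss t \<omega>)
    \<le> R\<^sup>2 / (2 * \<eta>) + real T * (\<eta> * G\<^sup>2 / 2) + 2 * G * D * sqrt (2 * real T * ln (1 / p)))"
proof -
  let ?s = "2 * G * D * sqrt (2 * real T * ln (1 / p))"
  obtain N where N: "N \<in> null_sets M" and loss_le: "\<And>\<omega>. \<omega> \<in> space M - N \<Longrightarrow> (\<Sum>t=1..T. switched_loss t \<omega>)
     \<le> bregman \<Phi> d\<Phi> wstar (w 1 \<omega>) / \<eta> + real T * (\<eta> * G\<^sup>2 / 2) + (\<Sum>t=1..T. increment t \<omega>)"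
    using switched_loss_sum_le by (rule AE_E3) blast
  define A where "A = (space M - {\<omega>\<in>space M. ?s < (\<Sum>t=1..T. increment t \<omega>)}) - N"
  have tail: "{\<omega>\<in>space M. ?s < (\<Sum>t=1..T. increment t \<omega>)} \<in> sets M"
    using measurable_Fs_imp_measurable[OF increments.partial_sum_measurable[OF order_refl]] by measurable
  then have "A \<in> sets M"
    using N unfolding A_def by auto
  moreover have "1 - p \<le> measure M A"
    using increments.azuma_hoeffding_confidence[OF p] tail N
    unfolding A_def by (simp add: measure_Diff_null_set prob_compl)
  moreover have "(\<Sum>t=1..T. switched_loss t \<omega>) \<le> R\<^sup>2 / (2 * \<eta>) + real T * (\<eta> * G\<^sup>2 / 2) + ?s"
    if "\<omega> \<in> A" for \<omega>
  proof -
    have "bregman \<Phi> d\<Phi> wstar (w 1 \<omega>) / \<eta> \<le> R\<^sup>2 / 2 / \<eta>"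
      using R[OF init] that \<eta> unfolding A_def by (intro divide_right_mono) auto
    then show ?thesis
      using loss_le[of \<omega>] that unfolding A_def by auto
  qed
  ultimately show ?thesis
    by blast
qed

lemma accepted_average_bounds_at:
  assumes f: "convex_on W f" and h: "convex_on W h" and \<omega>: "\<omega> \<in> space M" and Err: "0 \<le> Err"
    and err: "\<forall>t\<in>{1..T}. \<bar>v t \<omega> - h (w t \<omega>)\<bar> \<le> Err"
    and regret: "(\<Sum>t=1..T. switched_loss t \<omega>) \<le> real T * (\<epsilon> - Err)"
  shows "let S = {t\<in>{1..T}. v t \<omega> \<le> \<epsilon>}; wbar = (1 / real (card S)) *\<^sub>R (\<Sum>t\<in>S. w t \<omega>)
    in S \<noteq> {} \<and> f wbar - f wstar \<le> \<epsilon> \<and> h wbar \<le> \<epsilon> + Err"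
proof -
  have nonempty: "{1..T} \<noteq> {}"
    using T by simp
  have W_\<omega>: "\<And>t. t \<in> {1..T} \<Longrightarrow> w t \<omega> \<in> W"
    using iterate_in_W \<omega> by auto
  have err_\<omega>: "\<And>t. t \<in> {1..T} \<Longrightarrow> \<bar>v t \<omega> - h (w t \<omega>)\<bar> \<le> Err"
    using err by blast
  have regret_\<omega>: "(\<Sum>t\<in>{1..T}. if v t \<omega> \<le> \<epsilon> then f (w t \<omega>) - f wstar else h (w t \<omega>) - h wstar)
      \<le> real (card {1..T}) * (\<epsilon> - Err)"
    using regret unfolding switched_loss_def by simp
  from accepted_average_bounds[OF f h finite_atLeastAtMost nonempty W_\<omega> wstar(2) err_\<omega> regret_\<omega>] Err
  show ?thesis
    unfolding Let_def by auto
qed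

end

theorem theorem6p2:
  fixes W :: "'a::banach set"
    and \<Phi> :: "'a \<Rightarrow> real" and d\<Phi> :: "'a \<Rightarrow> ('a \<Rightarrow>\<^sub>L real)"
    and f h :: "'a \<Rightarrow> real" and wstar :: 'a
    and M :: "'w measure" and Flt :: "nat \<Rightarrow> 'w measure" and Z :: "'z measure"
    and F' H' :: "'a \<Rightarrow> 'z \<Rightarrow> ('a \<Rightarrow>\<^sub>L real)"
    and w :: "nat \<Rightarrow> 'w \<Rightarrow> 'a" and v :: "nat \<Rightarrow> 'w \<Rightarrow> real" and \<zeta> :: "nat \<Rightarrow> 'w \<Rightarrow> 'z"
    and D R G \<eta> \<delta> Err :: real and T :: nat
  defines "\<epsilon> \<equiv> R\<^sup>2 / (2 * \<eta> * real T) + \<eta> * G\<^sup>2 / 2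
                 + 2 * D * G / sqrt (real T) * sqrt (2 * ln (4 / \<delta>)) + Err"
  assumes refl: "reflexive_space TYPE('a)"
    and W: "W \<noteq> {}" "closed W" "convex W"
    and mirror: "mirror_map W \<Phi> d\<Phi>"
    and convex: "convex_on W f" "convex_on W h"
    and opt: "wstar \<in> W" "h wstar \<le> 0" "\<forall>u\<in>W. h u \<le> 0 \<longrightarrow> f wstar \<le> f u"
    and diam: "\<forall>u\<in>W. \<forall>u'\<in>W. norm (u - u') \<le> D"
    and breg: "\<forall>u\<in>W. \<forall>u'\<in>W. bregman \<Phi> d\<Phi> u u' \<le> R\<^sup>2 / 2"
    and eta: "\<eta> > 0" and T: "T \<ge> 1"
    and delta: "0 < \<delta>" "\<delta> < 1"
    and prob: "prob_space M"
    and filt: "\<forall>t. subalgebra M (Flt t)" "\<forall>s t. s \<le> t \<longrightarrow> sets (Flt s) \<subseteq> sets (Flt t)"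
    and meas_w: "\<forall>t\<in>{1..T}. w t \<in> borel_measurable (Flt t)"
    and meas_v: "\<forall>t\<in>{1..T}. v t \<in> borel_measurable (Flt t)"
    and meas_\<zeta>: "\<forall>t\<in>{1..T}. \<zeta> t \<in> measurable (Flt (Suc t)) Z"
    and init: "\<forall>\<omega>\<in>space M. w 1 \<omega> \<in> W"
    and step: "\<forall>t\<in>{1..T}. \<forall>\<omega>\<in>space M.
        w (Suc t) \<omega> \<in> W \<and>
        (\<forall>u\<in>W. \<eta> * blinfun_apply (if v t \<omega> \<le> \<epsilon> then F' (w t \<omega>) (\<zeta> t \<omega>) else H' (w t \<omega>) (\<zeta> t \<omega>)) (w (Suc t) \<omega>)
                  + bregman \<Phi> d\<Phi> (w (Suc t) \<omega>) (w t \<omega>)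
              \<le> \<eta> * blinfun_apply (if v t \<omega> \<le> \<epsilon> then F' (w t \<omega>) (\<zeta> t \<omega>) else H' (w t \<omega>) (\<zeta> t \<omega>)) u
                  + bregman \<Phi> d\<Phi> u (w t \<omega>))"
    and sgF: "\<forall>t\<in>{1..T}. cond_exp_in M (Flt t) (\<lambda>\<omega>. F' (w t \<omega>) (\<zeta> t \<omega>)) (\<lambda>\<omega>. subdiff_on W f (w t \<omega>))"
    and sgH: "\<forall>t\<in>{1..T}. cond_exp_in M (Flt t) (\<lambda>\<omega>. H' (w t \<omega>) (\<zeta> t \<omega>)) (\<lambda>\<omega>. subdiff_on W h (w t \<omega>))"
    and bndF: "\<forall>t\<in>{1..T}. AE \<omega> in M. \<forall>u\<in>W. norm (F' u (\<zeta> t \<omega>)) \<le> G"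
    and bndH: "\<forall>t\<in>{1..T}. AE \<omega> in M. \<forall>u\<in>W. norm (H' u (\<zeta> t \<omega>)) \<le> G"
    and Err: "Err \<ge> 0"
    and err_event: "\<exists>B\<in>sets M. measure M B \<ge> 1 - \<delta> / 2 \<and>
        (\<forall>\<omega>\<in>B. \<forall>t\<in>{1..T}. \<bar>v t \<omega> - h (w t \<omega>)\<bar> \<le> Err)"
  shows "\<exists>A\<in>sets M. measure M A \<ge> 1 - \<delta> \<and>
     (\<forall>\<omega>\<in>A.
        let S = {t\<in>{1..T}. v t \<omega> \<le> \<epsilon>};
            wbar = (1 / real (card S)) *\<^sub>R (\<Sum>t\<in>S. w t \<omega>)
        in S \<noteq> {} \<and> f wbar - f wstar \<le> \<epsilon> \<and> h wbar \<le> \<epsilon> + Err)"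
proof -
  interpret switching_gradient M Flt W \<Phi> d\<Phi> f h wstar F' H' w v \<zeta> D G \<eta> \<epsilon> T
    by (intro switching_gradient.intro filtered_prob_space.intro filtered_prob_space_axioms.intro
        switching_gradient_axioms.intro prob)
      (use W mirror opt diam eta T filt meas_w meas_v init step sgF sgH bndF bndH in simp_all)
  have p: "0 < \<delta> / 4" "\<delta> / 4 \<le> 1"
    using delta by auto
  obtain A where A: "A \<in> sets M" "1 - \<delta> / 4 \<le> measure M A"
    and regret: "\<forall>\<omega>\<in>A. (\<Sum>t=1..T. switched_loss t \<omega>) \<le> R\<^sup>2 / (2 * \<eta>) + real T * (\<eta> * G\<^sup>2 / 2)
      + 2 * G * D * sqrt (2 * real T * ln (1 / (\<delta> / 4)))"
    using switched_loss_sum_high_prob[OF p] breg opt(1) by blast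
  obtain B where B: "B \<in> sets M" "1 - \<delta> / 2 \<le> measure M B"
    and err: "\<forall>\<omega>\<in>B. \<forall>t\<in>{1..T}. \<bar>v t \<omega> - h (w t \<omega>)\<bar> \<le> Err"
    using err_event by blast
  have "R\<^sup>2 / (2 * \<eta>) + real T * (\<eta> * G\<^sup>2 / 2) + 2 * G * D * sqrt (2 * real T * ln (1 / (\<delta> / 4)))
      = real T * (\<epsilon> - Err)"
    using eta T by (simp add: \<epsilon>_def real_sqrt_mult field_simps)
  with regret err have "let S = {t\<in>{1..T}. v t \<omega> \<le> \<epsilon>}; wbar = (1 / real (card S)) *\<^sub>R (\<Sum>t\<in>S. w t \<omega>)
    in S \<noteq> {} \<and> f wbar - f wstar \<le> \<epsilon> \<and> h wbar \<le> \<epsilon> + Err" if "\<omega> \<in> A \<inter> B" for \<omega>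
    using that sets.sets_into_space[OF A(1)] by (intro accepted_average_bounds_at[OF convex _ Err]) auto
  moreover have "1 - \<delta> \<le> measure M (A \<inter> B)"
    using prob_Int_ge[OF A(1) B(1)] A(2) B(2) delta by linarith
  ultimately show ?thesis
    using A(1) B(1) by (intro bexI[of _ "A \<inter> B"]) auto
qed

end
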